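(* For all $\lambda\mu\mathrm{T}$-terms $t_1,t_2,t_3$: if $t_1\to_B t_2\to_A t_3$, then there is a term $t_4$ with $t_1\to_A t_4$ and $t_4\twoheadrightarrow_{AB}t_3$. Consequently, if $t_1\twoheadrightarrow_B t_2\to_A t_3$, then there is $t_4$ with $t_1\to_A t_4\twoheadrightarrow_{AB} t_3$.
   Context: The calculus $\lambda\mu\mathrm{T}$ (raw terms). Types: $\rho,\sigma,\tau ::= \mathbb{N} \mid \sigma\to\tau$. Over infinite sets of $\lambda$-variables $x,y,\dots$ and $\mu$-variables $\alpha,\beta,\gamma,\dots$, terms and commands are mutually defined by $t,r,s ::= x \mid \lambda x{:}\rho.r \mid t\,s \mid \mu\alpha{:}\rho.c \mid 0 \mid \mathsf{S}\,t \mid \mathsf{nrec}_\rho\ r\ s\ t$ and $c ::= [\alpha]t$. Terms are considered modulo renaming of bound variables; $FCV(t)$ = free $\mu$-variables; $t[x:=r]$ is capture-avoiding substitution. Numerals: $\underline{n} := \mathsf{S}^n 0$. Contexts: $E ::= \Box \mid E\,t \mid \mathsf{S}\,E \mid \mathsf{nrec}\ r\ s\ E$; $E[u]$ fills the hole with $u$. Structural substitution $t[\alpha:=\beta E]$ is homomorphic on all constructs (capture-avoiding) except $([\alpha]u)[\alpha:=\beta E] := [\beta]E[u[\alpha:=\beta E]]$ (and $([\gamma]u)[\alpha:=\beta E]:=[\gamma](u[\alpha:=\beta E])$ for $\gamma\neq\alpha$). $\to_A$ is the compatible closure (on terms and commands) of: $(\lambda x.t)r\to t[x:=r]$; $\mathsf{S}(\mu\alpha.c)\to\mu\alpha.c[\alpha:=\alpha(\mathsf{S}\,\Box)]$;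 $(\mu\alpha.c)s\to\mu\alpha.c[\alpha:=\alpha(\Box\,s)]$; $\mathsf{nrec}\ r\ s\ 0\to r$; $\mathsf{nrec}\ r\ s\ (\mathsf{S}\,\underline{n})\to s\ \underline{n}\ (\mathsf{nrec}\ r\ s\ \underline{n})$; $\mathsf{nrec}\ r\ s\ (\mu\alpha.c)\to\mu\alpha.c[\alpha:=\alpha(\mathsf{nrec}\ r\ s\ \Box)]$. $\to_B$ is the compatible closure of $\mu\alpha.[\alpha]t\to t$ (if $\alpha\notin FCV(t)$) and $[\alpha]\mu\beta.c\to c[\beta:=\alpha\,\Box]$. $\to_{AB}:=\to_A\cup\to_B$; $\twoheadrightarrow_X$ denotes the reflexive–transitive closure of $\to_X$. *)

theory Defs
  imports Main
begin

text \<open>Raw terms of lambda-mu-T, modulo alpha-conversion, represented with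
 de Bruijn indices (separately for lambda-variables and mu-variables).\<close>

datatype ty = TNat | TArr ty ty

datatype trm = Var nat | Lam ty trm | App trm trm | Mu ty cmd | Zero | S trm
  | Nrec ty trm trm trm
and cmd = Cmd nat trm

fun liftL :: "nat \<Rightarrow> trm \<Rightarrow> trm" and liftLc :: "nat \<Rightarrow> cmd \<Rightarrow> cmd" where
  "liftL k (Var i) = (if i < k then Var i else Var (Suc i))"
| "liftL k (Lam \<rho> t) = Lam \<rho> (liftL (Suc k) t)"
| "liftL k (App t s) = App (liftL k t) (liftL k s)"
| "liftL k (Mu \<rho> c) = Mu \<rho> (liftLc k c)"
| "liftL k Zero = Zero"
| "liftL k (S t) = S (liftL k t)"
| "liftL k (Nrec \<rho> r s t) = Nrec \<rho> (liftL k r) (liftL k s) (liftL k t)"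
| "liftLc k (Cmd i t) = Cmd i (liftL k t)"

fun liftM :: "nat \<Rightarrow> trm \<Rightarrow> trm" and liftMc :: "nat \<Rightarrow> cmd \<Rightarrow> cmd" where
  "liftM k (Var i) = Var i"
| "liftM k (Lam \<rho> t) = Lam \<rho> (liftM k t)"
| "liftM k (App t s) = App (liftM k t) (liftM k s)"
| "liftM k (Mu \<rho> c) = Mu \<rho> (liftMc (Suc k) c)"
| "liftM k Zero = Zero"
| "liftM k (S t) = S (liftM k t)"
| "liftM k (Nrec \<rho> r s t) = Nrec \<rho> (liftM k r) (liftM k s) (liftM k t)"
| "liftMc k (Cmd i t) = Cmd (if i < k then i else Suc i) (liftM k t)"

fun lowerM :: "nat \<Rightarrow> trm \<Rightarrow> trm" and lowerMc :: "nat \<Rightarrow> cmd \<Rightarrow> cmd" where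
  "lowerM k (Var i) = Var i"
| "lowerM k (Lam \<rho> t) = Lam \<rho> (lowerM k t)"
| "lowerM k (App t s) = App (lowerM k t) (lowerM k s)"
| "lowerM k (Mu \<rho> c) = Mu \<rho> (lowerMc (Suc k) c)"
| "lowerM k Zero = Zero"
| "lowerM k (S t) = S (lowerM k t)"
| "lowerM k (Nrec \<rho> r s t) = Nrec \<rho> (lowerM k r) (lowerM k s) (lowerM k t)"
| "lowerMc k (Cmd i t) = Cmd (if k < i then i - 1 else i) (lowerM k t)"

fun freeM :: "nat \<Rightarrow> trm \<Rightarrow> bool" and freeMc :: "nat \<Rightarrow> cmd \<Rightarrow> bool" where
  "freeM k (Var i) = False"
| "freeM k (Lam \<rho> t) = freeM k t"
| "freeM k (App t s) = (freeM k t \<or> freeM k s)"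
| "freeM k (Mu \<rho> c) = freeMc (Suc k) c"
| "freeM k Zero = False"
| "freeM k (S t) = freeM k t"
| "freeM k (Nrec \<rho> r s t) = (freeM k r \<or> freeM k s \<or> freeM k t)"
| "freeMc k (Cmd i t) = (i = k \<or> freeM k t)"

fun subst :: "nat \<Rightarrow> trm \<Rightarrow> trm \<Rightarrow> trm" and substc :: "nat \<Rightarrow> trm \<Rightarrow> cmd \<Rightarrow> cmd" where
  "subst k r (Var i) = (if i < k then Var i else if i = k then r else Var (i - 1))"
| "subst k r (Lam \<rho> t) = Lam \<rho> (subst (Suc k) (liftL 0 r) t)"
| "subst k r (App t s) = App (subst k r t) (subst k r s)"
| "subst k r (Mu \<rho> c) = Mu \<rho> (substc k (liftM 0 r) c)"
| "subst k r Zero = Zero"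
| "subst k r (S t) = S (subst k r t)"
| "subst k r (Nrec \<rho> r' s t) = Nrec \<rho> (subst k r r') (subst k r s) (subst k r t)"
| "substc k r (Cmd i t) = Cmd i (subst k r t)"

datatype ctx = Hole | CApp ctx trm | CS ctx | CNrec ty trm trm ctx

fun fill :: "ctx \<Rightarrow> trm \<Rightarrow> trm" where
  "fill Hole u = u"
| "fill (CApp E t) u = App (fill E u) t"
| "fill (CS E) u = S (fill E u)"
| "fill (CNrec \<rho> r s E) u = Nrec \<rho> r s (fill E u)"

fun liftLE :: "nat \<Rightarrow> ctx \<Rightarrow> ctx" where
  "liftLE k Hole = Hole"
| "liftLE k (CApp E t) = CApp (liftLE k E) (liftL k t)"
| "liftLE k (CS E) = CS (liftLE k E)"
| "liftLE k (CNrec \<rho> r s E) = CNrec \<rho> (liftL k r) (liftL k s) (liftLE k E)"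

fun liftME :: "nat \<Rightarrow> ctx \<Rightarrow> ctx" where
  "liftME k Hole = Hole"
| "liftME k (CApp E t) = CApp (liftME k E) (liftM k t)"
| "liftME k (CS E) = CS (liftME k E)"
| "liftME k (CNrec \<rho> r s E) = CNrec \<rho> (liftM k r) (liftM k s) (liftME k E)"

text \<open>Structural substitution \<open>t[\<alpha>:=\<beta> E]\<close> with \<open>\<alpha>\<close> = mu-index k, \<open>\<beta>\<close> = mu-index b
 (capture-avoiding; indices other than k are untouched).\<close>
fun ssub :: "nat \<Rightarrow> nat \<Rightarrow> ctx \<Rightarrow> trm \<Rightarrow> trm"
and ssubc :: "nat \<Rightarrow> nat \<Rightarrow> ctx \<Rightarrow> cmd \<Rightarrow> cmd" where
  "ssub k b E (Var i) = Var i"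
| "ssub k b E (Lam \<rho> t) = Lam \<rho> (ssub k b (liftLE 0 E) t)"
| "ssub k b E (App t s) = App (ssub k b E t) (ssub k b E s)"
| "ssub k b E (Mu \<rho> c) = Mu \<rho> (ssubc (Suc k) (Suc b) (liftME 0 E) c)"
| "ssub k b E Zero = Zero"
| "ssub k b E (S t) = S (ssub k b E t)"
| "ssub k b E (Nrec \<rho> r s t) = Nrec \<rho> (ssub k b E r) (ssub k b E s) (ssub k b E t)"
| "ssubc k b E (Cmd i u) =
     (if i = k then Cmd b (fill E (ssub k b E u)) else Cmd i (ssub k b E u))"

fun num :: "nat \<Rightarrow> trm" where
  "num 0 = Zero"
| "num (Suc n) = S (num n)"

inductive rootA :: "trm \<Rightarrow> trm \<Rightarrow> bool" where
  beta: "rootA (App (Lam \<rho> t) r) (subst 0 r t)"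
| muS: "rootA (S (Mu \<rho> c)) (Mu \<rho> (ssubc 0 0 (CS Hole) c))"
| muApp: "rootA (App (Mu \<rho> c) s) (Mu \<rho> (ssubc 0 0 (CApp Hole (liftM 0 s)) c))"
| nrec0: "rootA (Nrec \<rho> r s Zero) r"
| nrecS: "rootA (Nrec \<rho> r s (S (num n))) (App (App s (num n)) (Nrec \<rho> r s (num n)))"
| muNrec: "rootA (Nrec \<rho> r s (Mu \<sigma> c))
             (Mu \<sigma> (ssubc 0 0 (CNrec \<rho> (liftM 0 r) (liftM 0 s) Hole) c))"

text \<open>Root rules of B: one on terms, one on commands.
 \<open>\<mu>\<alpha>.[\<alpha>]t \<rightarrow> t\<close> if \<open>\<alpha> \<notin> FCV(t)\<close>;  \<open>[\<alpha>]\<mu>\<beta>.c \<rightarrow> c[\<beta>:=\<alpha> \<box>]\<close>.\<close>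
inductive rootBt :: "trm \<Rightarrow> trm \<Rightarrow> bool" where
  muEta: "\<not> freeM 0 t \<Longrightarrow> rootBt (Mu \<rho> (Cmd 0 t)) (lowerM 0 t)"

inductive rootBc :: "cmd \<Rightarrow> cmd \<Rightarrow> bool" where
  rename: "rootBc (Cmd a (Mu \<rho> c)) (lowerMc 0 (ssubc 0 (Suc a) Hole c))"

inductive compat :: "(trm \<Rightarrow> trm \<Rightarrow> bool) \<Rightarrow> (cmd \<Rightarrow> cmd \<Rightarrow> bool) \<Rightarrow> trm \<Rightarrow> trm \<Rightarrow> bool"
and compatc :: "(trm \<Rightarrow> trm \<Rightarrow> bool) \<Rightarrow> (cmd \<Rightarrow> cmd \<Rightarrow> bool) \<Rightarrow> cmd \<Rightarrow> cmd \<Rightarrow> bool"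
for Rt :: "trm \<Rightarrow> trm \<Rightarrow> bool" and Rc :: "cmd \<Rightarrow> cmd \<Rightarrow> bool" where
  root: "Rt t u \<Longrightarrow> compat Rt Rc t u"
| lam: "compat Rt Rc t u \<Longrightarrow> compat Rt Rc (Lam \<rho> t) (Lam \<rho> u)"
| appL: "compat Rt Rc t u \<Longrightarrow> compat Rt Rc (App t s) (App u s)"
| appR: "compat Rt Rc t u \<Longrightarrow> compat Rt Rc (App s t) (App s u)"
| mu: "compatc Rt Rc c d \<Longrightarrow> compat Rt Rc (Mu \<rho> c) (Mu \<rho> d)"
| suc: "compat Rt Rc t u \<Longrightarrow> compat Rt Rc (S t) (S u)"
| nrec1: "compat Rt Rc t u \<Longrightarrow> compat Rt Rc (Nrec \<rho> t s r) (Nrec \<rho> u s r)"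
| nrec2: "compat Rt Rc t u \<Longrightarrow> compat Rt Rc (Nrec \<rho> s t r) (Nrec \<rho> s u r)"
| nrec3: "compat Rt Rc t u \<Longrightarrow> compat Rt Rc (Nrec \<rho> s r t) (Nrec \<rho> s r u)"
| rootc: "Rc c d \<Longrightarrow> compatc Rt Rc c d"
| cmd: "compat Rt Rc t u \<Longrightarrow> compatc Rt Rc (Cmd i t) (Cmd i u)"

definition stepA :: "trm \<Rightarrow> trm \<Rightarrow> bool" where
  "stepA = compat rootA (\<lambda>_ _. False)"

definition stepB :: "trm \<Rightarrow> trm \<Rightarrow> bool" where
  "stepB = compat rootBt rootBc"

definition stepAB :: "trm \<Rightarrow> trm \<Rightarrow> bool" where
  "stepAB t u \<longleftrightarrow> stepA t u \<or> stepB t u"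

end

theory Submission
  imports Defs
begin

text \<open>
  For single B-steps this is proved by
  induction on the B-step and case analysis on the A-step
  (\<open>redB_commutes\<close>); the version for B-reductions then follows by a general
  fact of abstract rewriting (\<open>commute_rtranclp\<close>).

  The case analysis needs many syntactic facts about lifting, lowering,
  lambda-substitution and structural substitution.  Rather than proving them
  separately, we introduce one simultaneous structural substitution
  \<open>msub \<sigma>\<close>, which replaces every command \<open>[i]u\<close> by \<open>[j]E[u]\<close> where
  \<open>\<sigma> i = (j, E)\<close>.  Lifting and lowering of mu-indices, the renaming in the
  B-rule \<open>[\<alpha>]\<mu>\<beta>.c \<rightarrow> c[\<beta>:=\<alpha>\<box>]\<close> and \<open>t[\<alpha>:=\<beta> E]\<close> are instances,
  and substitutions compose (\<open>msub_msub\<close>).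
\<close>

fun ctx_comp :: "ctx \<Rightarrow> ctx \<Rightarrow> ctx" where
  "ctx_comp Hole E = E"
| "ctx_comp (CApp F t) E = CApp (ctx_comp F E) t"
| "ctx_comp (CS F) E = CS (ctx_comp F E)"
| "ctx_comp (CNrec \<rho> r s F) E = CNrec \<rho> r s (ctx_comp F E)"

lemma fill_ctx_comp [simp]: "fill (ctx_comp F E) x = fill F (fill E x)"
  by (induct F) auto

lemma ctx_comp_Hole [simp]: "ctx_comp E Hole = E"
  by (induct E) auto

lemma liftLE_ctx_comp [simp]: "liftLE j (ctx_comp F E) = ctx_comp (liftLE j F) (liftLE j E)"
  by (induct F) auto

lemma liftME_ctx_comp [simp]: "liftME j (ctx_comp F E) = ctx_comp (liftME j F) (liftME j E)"
  by (induct F) auto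

lemma liftL_fill [simp]: "liftL j (fill E x) = fill (liftLE j E) (liftL j x)"
  by (induct E) auto

lemma liftL_liftL:
  "i \<le> j \<Longrightarrow> liftL i (liftL j t) = liftL (Suc j) (liftL i t)"
  "i \<le> j \<Longrightarrow> liftLc i (liftLc j c) = liftLc (Suc j) (liftLc i c)"
  by (induct t and c arbitrary: i j and i j) auto

lemma liftLE_liftLE: "i \<le> j \<Longrightarrow> liftLE i (liftLE j E) = liftLE (Suc j) (liftLE i E)"
  by (induct E) (auto simp: liftL_liftL)

lemma liftL_liftM:
  "liftL j (liftM k t) = liftM k (liftL j t)"
  "liftLc j (liftMc k c) = liftMc k (liftLc j c)"
  by (induct t and c arbitrary: j k and j k) auto

lemma liftLE_liftME: "liftLE j (liftME k E) = liftME k (liftLE j E)"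
  by (induct E) (auto simp: liftL_liftM)

section \<open>Simultaneous structural substitution\<close>

text \<open>A simultaneous structural substitution maps every free mu-index \<open>i\<close> to a
  pair \<open>(j, E)\<close>: the command \<open>[i]u\<close> becomes \<open>[j]E[u]\<close>.\<close>
type_synonym musub = "nat \<Rightarrow> nat \<times> ctx"

definition sub_liftL :: "nat \<Rightarrow> musub \<Rightarrow> musub" where
  "sub_liftL j \<sigma> i = (fst (\<sigma> i), liftLE j (snd (\<sigma> i)))"

definition sub_under_mu :: "musub \<Rightarrow> musub" where
  "sub_under_mu \<sigma> i =
     (case i of 0 \<Rightarrow> (0, Hole) | Suc j \<Rightarrow> (Suc (fst (\<sigma> j)), liftME 0 (snd (\<sigma> j))))"

fun msub :: "musub \<Rightarrow> trm \<Rightarrow> trm" and msubc :: "musub \<Rightarrow> cmd \<Rightarrow> cmd" where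
  "msub \<sigma> (Var i) = Var i"
| "msub \<sigma> (Lam \<rho> t) = Lam \<rho> (msub (sub_liftL 0 \<sigma>) t)"
| "msub \<sigma> (App t s) = App (msub \<sigma> t) (msub \<sigma> s)"
| "msub \<sigma> (Mu \<rho> c) = Mu \<rho> (msubc (sub_under_mu \<sigma>) c)"
| "msub \<sigma> Zero = Zero"
| "msub \<sigma> (S t) = S (msub \<sigma> t)"
| "msub \<sigma> (Nrec \<rho> r s t) = Nrec \<rho> (msub \<sigma> r) (msub \<sigma> s) (msub \<sigma> t)"
| "msubc \<sigma> (Cmd i t) = Cmd (fst (\<sigma> i)) (fill (snd (\<sigma> i)) (msub \<sigma> t))"

fun msubE :: "musub \<Rightarrow> ctx \<Rightarrow> ctx" where
  "msubE \<sigma> Hole = Hole"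
| "msubE \<sigma> (CApp E t) = CApp (msubE \<sigma> E) (msub \<sigma> t)"
| "msubE \<sigma> (CS E) = CS (msubE \<sigma> E)"
| "msubE \<sigma> (CNrec \<rho> r s E) = CNrec \<rho> (msub \<sigma> r) (msub \<sigma> s) (msubE \<sigma> E)"

lemma msub_fill [simp]: "msub \<sigma> (fill E x) = fill (msubE \<sigma> E) (msub \<sigma> x)"
  by (induct E) auto

lemma msub_num [simp]: "msub \<sigma> (num n) = num n"
  by (induct n) auto

text \<open>Pure renamings of mu-indices, and the index maps we need: lifting and
  lowering at \<open>k\<close>, and the renaming \<open>0 \<mapsto> a, Suc j \<mapsto> j\<close> performed by the
  B-rule \<open>[a]\<mu>.c \<rightarrow> c[0:=a\<box>]\<close>.\<close>
definition ren :: "(nat \<Rightarrow> nat) \<Rightarrow> musub" where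
  "ren f i = (f i, Hole)"

definition ren_up :: "(nat \<Rightarrow> nat) \<Rightarrow> nat \<Rightarrow> nat" where
  "ren_up f i = (case i of 0 \<Rightarrow> 0 | Suc j \<Rightarrow> Suc (f j))"

definition lift_idx :: "nat \<Rightarrow> nat \<Rightarrow> nat" where
  "lift_idx k i = (if i < k then i else Suc i)"

definition lower_idx :: "nat \<Rightarrow> nat \<Rightarrow> nat" where
  "lower_idx k i = (if k < i then i - 1 else i)"

definition rename_idx :: "nat \<Rightarrow> nat \<Rightarrow> nat" where
  "rename_idx a i = (case i of 0 \<Rightarrow> a | Suc j \<Rightarrow> j)"

definition single :: "nat \<Rightarrow> nat \<Rightarrow> ctx \<Rightarrow> musub" where
  "single k b E i = (if i = k then (b, E) else (i, Hole))"

text \<open>Composition: \<open>msub (sub_comp \<sigma> \<tau>) = msub \<sigma> \<circ> msub \<tau>\<close> (lemma \<open>msub_msub\<close>).\<close>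
definition sub_comp :: "musub \<Rightarrow> musub \<Rightarrow> musub" where
  "sub_comp \<sigma> \<tau> i =
     (fst (\<sigma> (fst (\<tau> i))), ctx_comp (snd (\<sigma> (fst (\<tau> i)))) (msubE \<sigma> (snd (\<tau> i))))"

lemma fst_ren [simp]: "fst (ren f i) = f i"
  and snd_ren [simp]: "snd (ren f i) = Hole"
  by (auto simp: ren_def)

lemma sub_liftL_ren [simp]: "sub_liftL j (ren f) = ren f"
  by (rule ext) (simp add: sub_liftL_def ren_def)

lemma sub_under_mu_ren [simp]: "sub_under_mu (ren f) = ren (ren_up f)"
  by (rule ext) (simp add: sub_under_mu_def ren_def ren_up_def split: nat.split)

lemma ren_up_lift_idx [simp]: "ren_up (lift_idx k) = lift_idx (Suc k)"
  by (rule ext) (simp add: ren_up_def lift_idx_def split: nat.split)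

lemma ren_up_lower_idx [simp]: "ren_up (lower_idx k) = lower_idx (Suc k)"
  by (rule ext) (simp add: ren_up_def lower_idx_def split: nat.split)

lemma ren_up_id [simp]: "ren_up (\<lambda>i. i) = (\<lambda>i. i)"
  by (rule ext) (simp add: ren_up_def split: nat.split)

lemma sub_under_mu_0 [simp]: "sub_under_mu \<sigma> 0 = (0, Hole)"
  by (simp add: sub_under_mu_def)

lemma sub_liftL_single [simp]: "sub_liftL j (single k b E) = single k b (liftLE j E)"
  by (rule ext) (simp add: sub_liftL_def single_def)

lemma sub_under_mu_single [simp]:
  "sub_under_mu (single k b E) = single (Suc k) (Suc b) (liftME 0 E)"
  by (rule ext) (simp add: sub_under_mu_def single_def split: nat.split)

lemma liftM_as_msub:
  "liftM k t = msub (ren (lift_idx k)) t"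
  "liftMc k c = msubc (ren (lift_idx k)) c"
  by (induct t and c arbitrary: k and k) (auto simp: lift_idx_def)

lemma liftME_as_msub: "liftME k E = msubE (ren (lift_idx k)) E"
  by (induct E) (auto simp: liftM_as_msub)

lemma lowerM_as_msub:
  "lowerM k t = msub (ren (lower_idx k)) t"
  "lowerMc k c = msubc (ren (lower_idx k)) c"
  by (induct t and c arbitrary: k and k) (auto simp: lower_idx_def)

lemma ssub_as_msub:
  "ssub k b E t = msub (single k b E) t"
  "ssubc k b E c = msubc (single k b E) c"
  by (induct t and c arbitrary: k b E and k b E) (auto simp: single_def)

lemma msub_id [simp]:
  "msub (ren (\<lambda>i. i)) t = t"
  "msubc (ren (\<lambda>i. i)) c = c"
  by (induct t and c) auto

lemma msubE_id [simp]: "msubE (ren (\<lambda>i. i)) E = E"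
  by (induct E) auto

lemma sub_liftL_sub_liftL: "sub_liftL (Suc j) (sub_liftL 0 \<sigma>) = sub_liftL 0 (sub_liftL j \<sigma>)"
  by (rule ext) (simp add: sub_liftL_def liftLE_liftLE)

lemma sub_liftL_sub_under_mu: "sub_liftL j (sub_under_mu \<sigma>) = sub_under_mu (sub_liftL j \<sigma>)"
  by (rule ext) (simp add: sub_liftL_def sub_under_mu_def liftLE_liftME split: nat.split)

lemma msub_liftL:
  "msub (sub_liftL j \<sigma>) (liftL j r) = liftL j (msub \<sigma> r)"
  "msubc (sub_liftL j \<sigma>) (liftLc j c) = liftLc j (msubc \<sigma> c)"
proof (induct r and c arbitrary: j \<sigma> and j \<sigma>)
  case (Lam x1 x2) then show ?case by (simp add: sub_liftL_sub_liftL[symmetric])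
next
  case (Mu x1 x2) then show ?case by (simp add: sub_liftL_sub_under_mu[symmetric])
qed (auto simp: sub_liftL_def)

lemma msubE_liftLE: "msubE (sub_liftL j \<sigma>) (liftLE j E) = liftLE j (msubE \<sigma> E)"
  by (induct E) (auto simp: msub_liftL)

lemma msub_ren_liftL:
  "msub (ren f) (liftL j r) = liftL j (msub (ren f) r)"
  "msubc (ren f) (liftLc j c) = liftLc j (msubc (ren f) c)"
  using msub_liftL[of j "ren f"] by simp_all

lemma msub_ren:
  "msub \<sigma> (msub (ren f) t) = msub (\<lambda>a. \<sigma> (f a)) t"
  "msubc \<sigma> (msubc (ren f) c) = msubc (\<lambda>a. \<sigma> (f a)) c"
proof (induct t and c arbitrary: \<sigma> f and \<sigma> f)
  case (Lam x1 x2)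
  have "sub_liftL 0 (\<lambda>a. \<sigma> (f a)) = (\<lambda>a. sub_liftL 0 \<sigma> (f a))"
    by (rule ext) (simp add: sub_liftL_def)
  with Lam show ?case by simp
next
  case (Mu x1 x2)
  have "(\<lambda>a. sub_under_mu \<sigma> (ren_up f a)) = sub_under_mu (\<lambda>a. \<sigma> (f a))"
    by (rule ext) (simp add: sub_under_mu_def ren_up_def split: nat.split)
  with Mu show ?case by simp
qed auto

lemma msubE_ren: "msubE \<sigma> (msubE (ren f) E) = msubE (\<lambda>a. \<sigma> (f a)) E"
  by (induct E) (auto simp: msub_ren)

lemma ren_comp: "(\<lambda>a. ren g (f a)) = ren (\<lambda>a. g (f a))"
  by (rule ext) (simp add: ren_def)

lemma ren_ren:
  "msub (ren g) (msub (ren f) t) = msub (ren (\<lambda>a. g (f a))) t"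
  "msubc (ren g) (msubc (ren f) c) = msubc (ren (\<lambda>a. g (f a))) c"
  by (simp_all only: msub_ren ren_comp[of g f])

lemma ren_renE: "msubE (ren g) (msubE (ren f) E) = msubE (ren (\<lambda>a. g (f a))) E"
  by (simp only: msubE_ren ren_comp[of g f])

definition ren_after :: "(nat \<Rightarrow> nat) \<Rightarrow> musub \<Rightarrow> musub" where
  "ren_after f \<sigma> i = (f (fst (\<sigma> i)), msubE (ren f) (snd (\<sigma> i)))"

lemma ren_msub:
  "msub (ren f) (msub \<sigma> t) = msub (ren_after f \<sigma>) t"
  "msubc (ren f) (msubc \<sigma> c) = msubc (ren_after f \<sigma>) c"
proof (induct t and c arbitrary: \<sigma> f and \<sigma> f)
  case (Lam x1 x2)
  have "ren_after f (sub_liftL 0 \<sigma>) = sub_liftL 0 (ren_after f \<sigma>)"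
    by (rule ext) (simp add: ren_after_def sub_liftL_def msubE_liftLE[of 0 "ren f", simplified])
  with Lam show ?case by simp
next
  case (Mu x1 x2)
  have "ren_after (ren_up f) (sub_under_mu \<sigma>) = sub_under_mu (ren_after f \<sigma>)"
    by (rule ext) (simp add: ren_after_def sub_under_mu_def liftME_as_msub ren_renE
        lift_idx_def ren_up_def split: nat.split)
  with Mu show ?case by simp
next
  case (Cmd x1 x2) then show ?case by (simp add: ren_after_def)
qed auto

lemma ren_msubE: "msubE (ren f) (msubE \<sigma> E) = msubE (ren_after f \<sigma>) E"
  by (induct E) (auto simp: ren_msub)

lemma sub_under_mu_lift_idx: "(\<lambda>a. sub_under_mu \<sigma> (lift_idx 0 a)) = ren_after (lift_idx 0) \<sigma>"
  by (rule ext) (simp add: ren_after_def sub_under_mu_def lift_idx_def liftME_as_msub)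

lemma msubE_under_mu_liftME: "msubE (sub_under_mu \<sigma>) (liftME 0 E) = liftME 0 (msubE \<sigma> E)"
  by (simp add: liftME_as_msub msubE_ren ren_msubE sub_under_mu_lift_idx)

lemma msub_under_mu_liftM: "msub (sub_under_mu \<sigma>) (liftM 0 t) = liftM 0 (msub \<sigma> t)"
  by (simp add: liftM_as_msub msub_ren ren_msub sub_under_mu_lift_idx)

lemma msub_msub:
  "msub \<sigma> (msub \<tau> t) = msub (sub_comp \<sigma> \<tau>) t"
  "msubc \<sigma> (msubc \<tau> c) = msubc (sub_comp \<sigma> \<tau>) c"
proof (induct t and c arbitrary: \<sigma> \<tau> and \<sigma> \<tau>)
  case (Lam x1 x2)
  have "sub_comp (sub_liftL 0 \<sigma>) (sub_liftL 0 \<tau>) = sub_liftL 0 (sub_comp \<sigma> \<tau>)"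
    by (rule ext) (simp add: sub_comp_def sub_liftL_def msubE_liftLE)
  with Lam show ?case by simp
next
  case (Mu x1 x2)
  have "sub_comp (sub_under_mu \<sigma>) (sub_under_mu \<tau>) = sub_under_mu (sub_comp \<sigma> \<tau>)"
    by (rule ext) (simp add: sub_comp_def sub_under_mu_def msubE_under_mu_liftME split: nat.split)
  with Mu show ?case by simp
next
  case (Cmd x1 x2) then show ?case by (simp add: sub_comp_def)
qed auto

lemma single0_lift_idx: "(\<lambda>a. single 0 0 X (lift_idx 0 a)) = ren (lift_idx 0)"
  by (rule ext) (simp add: single_def lift_idx_def ren_def)

lemma msubE_single0_liftME: "msubE (single 0 0 X) (liftME 0 E) = liftME 0 E"
  by (simp add: liftME_as_msub msubE_ren single0_lift_idx)

lemma msub_single0_liftM: "msub (single 0 0 X) (liftM 0 t) = liftM 0 t"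
  by (simp add: liftM_as_msub msub_ren single0_lift_idx)

text \<open>Structural substitution for the bound index of a mu commutes with any
  substitution of the free indices; this is what makes the mu-rules of A
  stable under substitution.\<close>
lemma msubc_under_mu_single0:
  "msubc (sub_under_mu \<sigma>) (msubc (single 0 0 E) c)
   = msubc (single 0 0 (msubE (sub_under_mu \<sigma>) E)) (msubc (sub_under_mu \<sigma>) c)"
proof -
  have "sub_comp (sub_under_mu \<sigma>) (single 0 0 E)
      = sub_comp (single 0 0 (msubE (sub_under_mu \<sigma>) E)) (sub_under_mu \<sigma>)"
    by (rule ext) (simp add: sub_comp_def single_def sub_under_mu_def msubE_single0_liftME
        split: nat.split)
  then show ?thesis by (simp add: msub_msub)
qed

lemma msub_ren_cong:
  "(\<forall>i. freeM i t \<longrightarrow> f i = g i) \<Longrightarrow> msub (ren f) t = msub (ren g) t"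
  "(\<forall>i. freeMc i c \<longrightarrow> f i = g i) \<Longrightarrow> msubc (ren f) c = msubc (ren g) c"
proof (induct t and c arbitrary: f g and f g)
  case (Mu x1 x2)
  have "\<forall>j. freeMc j x2 \<longrightarrow> ren_up f j = ren_up g j"
    using Mu.prems by (auto simp: ren_up_def split: nat.split)
  with Mu show ?case by simp
qed auto

lemma freeM_ren:
  "freeM k (msub (ren f) t) \<Longrightarrow> \<exists>i. freeM i t \<and> f i = k"
  "freeMc k (msubc (ren f) c) \<Longrightarrow> \<exists>i. freeMc i c \<and> f i = k"
proof (induct t and c arbitrary: k f and k f)
  case (Mu x1 x2)
  from Mu.prems have "freeMc (Suc k) (msubc (ren (ren_up f)) x2)" by simp
  from Mu.hyps[OF this] obtain j where "freeMc j x2" "ren_up f j = Suc k" by blast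
  then show ?case by (cases j) (auto simp: ren_up_def)
qed (auto, blast+)

lemma lift_lower: "\<not> freeM 0 t \<Longrightarrow> liftM 0 (lowerM 0 t) = t"
proof -
  assume not_free: "\<not> freeM 0 t"
  have "liftM 0 (lowerM 0 t) = msub (ren (\<lambda>a. lift_idx 0 (lower_idx 0 a))) t"
    by (simp only: liftM_as_msub lowerM_as_msub ren_ren)
  also have "\<dots> = msub (ren (\<lambda>i. i)) t"
    by (rule msub_ren_cong) (use not_free in \<open>auto simp: lift_idx_def lower_idx_def\<close>)
  finally show ?thesis by simp
qed

lemma lower_lift [simp]: "lowerM 0 (liftM 0 t) = t"
proof -
  have "(\<lambda>a. lower_idx 0 (lift_idx 0 a)) = (\<lambda>i. i)"
    by (simp add: lift_idx_def lower_idx_def)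
  then show ?thesis by (simp only: liftM_as_msub lowerM_as_msub ren_ren msub_id)
qed

lemma not_freeM_liftM [simp]: "\<not> freeM 0 (liftM 0 t)"
  using freeM_ren(1)[of 0 "lift_idx 0" t] by (auto simp: liftM_as_msub lift_idx_def)

lemma rename_as_msub: "lowerMc 0 (ssubc 0 (Suc a) Hole c) = msubc (ren (rename_idx a)) c"
proof -
  have "single 0 (Suc a) Hole = ren (\<lambda>i. if i = 0 then Suc a else i)"
    by (rule ext) (simp add: single_def ren_def)
  moreover have "(\<lambda>x. lower_idx 0 (if x = 0 then Suc a else x)) = rename_idx a"
    by (rule ext) (simp add: lower_idx_def rename_idx_def split: nat.split)
  ultimately show ?thesis by (simp only: lowerM_as_msub ssub_as_msub ren_ren)
qed

lemma rename_idx_lift_idx: "(\<lambda>x. rename_idx a (lift_idx 0 x)) = (\<lambda>x. x)"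
  by (rule ext) (simp add: rename_idx_def lift_idx_def)

lemma rename_liftME [simp]: "msubE (ren (rename_idx a)) (liftME 0 E) = E"
  by (simp only: liftME_as_msub ren_renE rename_idx_lift_idx msubE_id)

lemma rename_liftM [simp]: "msub (ren (rename_idx a)) (liftM 0 t) = t"
  by (simp only: liftM_as_msub ren_ren rename_idx_lift_idx msub_id)

lemma rootBc_rename: "rootBc (Cmd a (Mu \<rho> c)) (msubc (ren (rename_idx a)) c)"
  using rootBc.rename[of a \<rho> c] by (simp add: rename_as_msub)

lemma rootBt_eta: "rootBt (Mu \<rho> (Cmd 0 (liftM 0 u))) u"
  using rootBt.muEta[of "liftM 0 u" \<rho>] by simp

lemma rootBt_inv: "rootBt t u \<Longrightarrow> \<exists>\<rho>. t = Mu \<rho> (Cmd 0 (liftM 0 u))"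
  by (erule rootBt.cases) (auto simp: lift_lower)

lemma rootBc_inv:
  "rootBc c d \<Longrightarrow> \<exists>a \<rho> c'. c = Cmd a (Mu \<rho> c') \<and> d = msubc (ren (rename_idx a)) c'"
  by (erule rootBc.cases) (auto simp: rename_as_msub)

lemma subst_liftL [simp]: "subst k r (liftL k t) = t" "substc k r (liftLc k c) = c"
  by (induct t and c arbitrary: k r and k r) auto

lemma subst_fill_liftLE [simp]: "subst k r (fill (liftLE k E) x) = fill E (subst k r x)"
  by (induct E) auto

lemma msub_subst:
  "msub \<sigma> (subst k r t) = subst k (msub \<sigma> r) (msub (sub_liftL k \<sigma>) t)"
  "msubc \<sigma> (substc k r c) = substc k (msub \<sigma> r) (msubc (sub_liftL k \<sigma>) c)"
proof (induct t and c arbitrary: k r \<sigma> and k r \<sigma>)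
  case (Lam x1 x2) then show ?case by (simp add: msub_liftL sub_liftL_sub_liftL)
next
  case (Mu x1 x2) then show ?case by (simp add: msub_under_mu_liftM sub_liftL_sub_under_mu)
qed (auto simp: sub_liftL_def)

lemma ren_subst:
  "msub (ren f) (subst k r t) = subst k (msub (ren f) r) (msub (ren f) t)"
  "msubc (ren f) (substc k r c) = substc k (msub (ren f) r) (msubc (ren f) c)"
  using msub_subst[of "ren f"] by simp_all

lemma liftL_subst:
  "k \<le> j \<Longrightarrow> liftL j (subst k r t) = subst k (liftL j r) (liftL (Suc j) t)"
  "k \<le> j \<Longrightarrow> liftLc j (substc k r c) = substc k (liftL j r) (liftLc (Suc j) c)"
proof (induct t and c arbitrary: j k r and j k r)
  case (Lam x1 x2) then show ?case by (simp add: liftL_liftL)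
next
  case (Mu x1 x2) then show ?case by (simp add: liftL_liftM)
qed auto

lemma liftL_num [simp]: "liftL j (num n) = num n"
  by (induct n) auto

lemma liftM_num [simp]: "liftM j (num n) = num n"
  by (induct n) auto

abbreviation noRule :: "cmd \<Rightarrow> cmd \<Rightarrow> bool" where "noRule \<equiv> \<lambda>_ _. False"
abbreviation redA :: "trm \<Rightarrow> trm \<Rightarrow> bool" where "redA \<equiv> compat rootA noRule"
abbreviation redAc :: "cmd \<Rightarrow> cmd \<Rightarrow> bool" where "redAc \<equiv> compatc rootA noRule"
abbreviation redB :: "trm \<Rightarrow> trm \<Rightarrow> bool" where "redB \<equiv> compat rootBt rootBc"
abbreviation redBc :: "cmd \<Rightarrow> cmd \<Rightarrow> bool" where "redBc \<equiv> compatc rootBt rootBc"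

definition stepABc :: "cmd \<Rightarrow> cmd \<Rightarrow> bool" where
  "stepABc c d \<longleftrightarrow> redAc c d \<or> redBc c d"

lemma stepAB_iff: "stepAB t u \<longleftrightarrow> redA t u \<or> redB t u"
  by (simp add: stepAB_def stepA_def stepB_def)

lemma rtranclp_map:
  assumes "R\<^sup>*\<^sup>* a b" and "\<And>x y. R x y \<Longrightarrow> Q\<^sup>*\<^sup>* (f x) (f y)"
  shows "Q\<^sup>*\<^sup>* (f a) (f b)"
  using assms(1) by (induct rule: rtranclp_induct) (auto intro: rtranclp_trans assms(2))

lemma redA_into_stepAB: "redA t u \<Longrightarrow> stepAB\<^sup>*\<^sup>* t u"
  by (simp add: stepAB_iff r_into_rtranclp)

lemma redB_into_stepAB: "redB t u \<Longrightarrow> stepAB\<^sup>*\<^sup>* t u"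
  by (simp add: stepAB_iff r_into_rtranclp)

lemma redBc_into_stepABc: "redBc c d \<Longrightarrow> stepABc\<^sup>*\<^sup>* c d"
  by (simp add: stepABc_def r_into_rtranclp)

lemma redAs_into_stepAB: "redA\<^sup>*\<^sup>* t u \<Longrightarrow> stepAB\<^sup>*\<^sup>* t u"
  using rtranclp_map[of redA t u stepAB "\<lambda>x. x"] by (simp add: redA_into_stepAB)

lemma stepAB_Lam: "stepAB\<^sup>*\<^sup>* t u \<Longrightarrow> stepAB\<^sup>*\<^sup>* (Lam \<rho> t) (Lam \<rho> u)"
  by (erule rtranclp_map) (auto simp: stepAB_iff intro: compat_compatc.intros)

lemma stepAB_Mu: "stepABc\<^sup>*\<^sup>* c d \<Longrightarrow> stepAB\<^sup>*\<^sup>* (Mu \<rho> c) (Mu \<rho> d)"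
  by (erule rtranclp_map)
    (auto simp: stepAB_iff stepABc_def intro: compat_compatc.intros)

lemma stepABc_Cmd: "stepAB\<^sup>*\<^sup>* t u \<Longrightarrow> stepABc\<^sup>*\<^sup>* (Cmd i t) (Cmd i u)"
  by (erule rtranclp_map)
    (auto simp: stepAB_iff stepABc_def intro: compat_compatc.intros)

lemma stepAB_S: "stepAB\<^sup>*\<^sup>* t u \<Longrightarrow> stepAB\<^sup>*\<^sup>* (S t) (S u)"
  by (erule rtranclp_map) (auto simp: stepAB_iff intro: compat_compatc.intros)

lemma stepAB_App:
  assumes "stepAB\<^sup>*\<^sup>* a a'" and "stepAB\<^sup>*\<^sup>* b b'"
  shows "stepAB\<^sup>*\<^sup>* (App a b) (App a' b')"
proof -
  have "stepAB\<^sup>*\<^sup>* (App a b) (App a' b)"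
    using assms(1) by (rule rtranclp_map)
      (auto simp: stepAB_iff intro: compat_compatc.intros)
  also have "stepAB\<^sup>*\<^sup>* (App a' b) (App a' b')"
    using assms(2) by (rule rtranclp_map)
      (auto simp: stepAB_iff intro: compat_compatc.intros)
  finally show ?thesis .
qed

lemma stepAB_Nrec:
  assumes "stepAB\<^sup>*\<^sup>* a a'" and "stepAB\<^sup>*\<^sup>* b b'" and "stepAB\<^sup>*\<^sup>* c c'"
  shows "stepAB\<^sup>*\<^sup>* (Nrec \<rho> a b c) (Nrec \<rho> a' b' c')"
proof -
  have "stepAB\<^sup>*\<^sup>* (Nrec \<rho> a b c) (Nrec \<rho> a' b c)"
    using assms(1) by (rule rtranclp_map)
      (auto simp: stepAB_iff intro: compat_compatc.intros)
  also have "stepAB\<^sup>*\<^sup>* (Nrec \<rho> a' b c) (Nrec \<rho> a' b' c)"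
    using assms(2) by (rule rtranclp_map)
      (auto simp: stepAB_iff intro: compat_compatc.intros)
  also have "stepAB\<^sup>*\<^sup>* (Nrec \<rho> a' b' c) (Nrec \<rho> a' b' c')"
    using assms(3) by (rule rtranclp_map)
      (auto simp: stepAB_iff intro: compat_compatc.intros)
  finally show ?thesis .
qed

lemma compat_fill: "compat R C t u \<Longrightarrow> compat R C (fill E t) (fill E u)"
  by (induct E) (auto intro: compat_compatc.intros)

lemma redAs_fill: "redA\<^sup>*\<^sup>* t u \<Longrightarrow> redA\<^sup>*\<^sup>* (fill E t) (fill E u)"
  by (erule rtranclp_map) (auto intro: compat_fill)

lemma stepAB_fill: "stepAB\<^sup>*\<^sup>* t u \<Longrightarrow> stepAB\<^sup>*\<^sup>* (fill E t) (fill E u)"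
  by (erule rtranclp_map) (auto simp: stepAB_iff intro: compat_fill)

section \<open>A-steps under substitution and lifting\<close>

lemma rootA_msub: "rootA t u \<Longrightarrow> rootA (msub \<sigma> t) (msub \<sigma> u)"
proof (induct rule: rootA.induct)
  case (beta \<rho> t r) then show ?case
    using rootA.beta[of \<rho> "msub (sub_liftL 0 \<sigma>) t" "msub \<sigma> r"] by (simp add: msub_subst)
next
  case (muS \<rho> c) then show ?case
    using rootA.muS[of \<rho> "msubc (sub_under_mu \<sigma>) c"]
    by (simp add: ssub_as_msub msubc_under_mu_single0)
next
  case (muApp \<rho> c s) then show ?case
    using rootA.muApp[of \<rho> "msubc (sub_under_mu \<sigma>) c" "msub \<sigma> s"]
    by (simp add: ssub_as_msub msubc_under_mu_single0 msub_under_mu_liftM)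
next
  case (muNrec \<rho> r s \<tau> c) then show ?case
    using rootA.muNrec[of \<rho> "msub \<sigma> r" "msub \<sigma> s" \<tau> "msubc (sub_under_mu \<sigma>) c"]
    by (simp add: ssub_as_msub msubc_under_mu_single0 msub_under_mu_liftM)
qed (auto intro: rootA.intros)

lemma redA_msub:
  "redA t u \<Longrightarrow> redA (msub \<sigma> t) (msub \<sigma> u)"
  "redAc c d \<Longrightarrow> redAc (msubc \<sigma> c) (msubc \<sigma> d)"
  by (induct t u and c d arbitrary: \<sigma> and \<sigma> rule: compat_compatc.inducts)
    (auto intro: compat_compatc.intros compat_fill rootA_msub)

lemma liftLc_ssubc: "liftLc j (ssubc k b E c) = ssubc k b (liftLE j E) (liftLc j c)"
  using msub_liftL(2)[of j "single k b E" c] by (simp add: ssub_as_msub)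

lemma rootA_liftL: "rootA t u \<Longrightarrow> rootA (liftL j t) (liftL j u)"
proof (induct rule: rootA.induct)
  case (beta \<rho> t r) then show ?case
    using rootA.beta[of \<rho> "liftL (Suc j) t" "liftL j r"] by (simp add: liftL_subst)
next
  case (muS \<rho> c) then show ?case
    using rootA.muS[of \<rho> "liftLc j c"] by (simp add: liftLc_ssubc)
next
  case (muApp \<rho> c s) then show ?case
    using rootA.muApp[of \<rho> "liftLc j c" "liftL j s"] by (simp add: liftLc_ssubc liftL_liftM)
next
  case (muNrec \<rho> r s \<tau> c) then show ?case
    using rootA.muNrec[of \<rho> "liftL j r" "liftL j s" \<tau> "liftLc j c"]
    by (simp add: liftLc_ssubc liftL_liftM)
qed (auto intro: rootA.intros)

lemma redA_liftL:
  "redA t u \<Longrightarrow> redA (liftL j t) (liftL j u)"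
  "redAc c d \<Longrightarrow> redAc (liftLc j c) (liftLc j d)"
  by (induct t u and c d arbitrary: j and j rule: compat_compatc.inducts)
    (auto intro: compat_compatc.intros rootA_liftL)

lemma single0_Hole: "single 0 0 Hole = ren (\<lambda>i. i)"
  by (rule ext) (simp add: single_def ren_def)

lemma sub_comp_single0:
  "sub_comp (single 0 0 F) (single 0 0 (liftME 0 E)) = single 0 0 (ctx_comp F (liftME 0 E))"
  by (rule ext) (simp add: sub_comp_def single_def msubE_single0_liftME)

lemma redAs_pull_mu: "redA\<^sup>*\<^sup>* (fill E (Mu \<rho> x)) (Mu \<rho> (msubc (single 0 0 (liftME 0 E)) x))"
proof -
  let ?pulled = "\<lambda>E. Mu \<rho> (msubc (single 0 0 (liftME 0 E)) x)"
  show ?thesis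
  proof (induct E)
    case Hole then show ?case by (simp add: single0_Hole)
  next
    case (CApp E s)
    have "redA\<^sup>*\<^sup>* (App (fill E (Mu \<rho> x)) s) (App (?pulled E) s)"
      using redAs_fill[OF CApp, of "CApp Hole s"] by simp
    moreover have "rootA (App (?pulled E) s) (?pulled (CApp E s))"
      using rootA.muApp[of \<rho> "msubc (single 0 0 (liftME 0 E)) x" s]
      by (simp add: ssub_as_msub msub_msub sub_comp_single0)
    ultimately show ?case by (auto intro: rtranclp.rtrancl_into_rtrancl compat_compatc.root)
  next
    case (CS E)
    have "redA\<^sup>*\<^sup>* (S (fill E (Mu \<rho> x))) (S (?pulled E))"
      using redAs_fill[OF CS, of "CS Hole"] by simp
    moreover have "rootA (S (?pulled E)) (?pulled (CS E))"
      using rootA.muS[of \<rho> "msubc (single 0 0 (liftME 0 E)) x"]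
      by (simp add: ssub_as_msub msub_msub sub_comp_single0)
    ultimately show ?case by (auto intro: rtranclp.rtrancl_into_rtrancl compat_compatc.root)
  next
    case (CNrec \<tau> r s E)
    have "redA\<^sup>*\<^sup>* (Nrec \<tau> r s (fill E (Mu \<rho> x))) (Nrec \<tau> r s (?pulled E))"
      using redAs_fill[OF CNrec, of "CNrec \<tau> r s Hole"] by simp
    moreover have "rootA (Nrec \<tau> r s (?pulled E)) (?pulled (CNrec \<tau> r s E))"
      using rootA.muNrec[of \<tau> r s \<rho> "msubc (single 0 0 (liftME 0 E)) x"]
      by (simp add: ssub_as_msub msub_msub sub_comp_single0)
    ultimately show ?case by (auto intro: rtranclp.rtrancl_into_rtrancl compat_compatc.root)
  qed
qed

section \<open>B-steps under substitution and lifting\<close>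

lemma rootBt_msub: "rootBt t u \<Longrightarrow> rootBt (msub \<sigma> t) (msub \<sigma> u)"
  using rootBt_eta[of _ "msub \<sigma> u"] by (auto dest!: rootBt_inv simp: msub_under_mu_liftM)

text \<open>Substituting into the result of a renaming B-step equals renaming after
  pulling the context of \<open>\<sigma> a\<close> into the mu-abstraction.\<close>
lemma msubc_rename:
  "msubc (ren (rename_idx (fst (\<sigma> a))))
     (msubc (single 0 0 (liftME 0 (snd (\<sigma> a)))) (msubc (sub_under_mu \<sigma>) c))
   = msubc \<sigma> (msubc (ren (rename_idx a)) c)"
proof -
  have "ren_after (rename_idx (fst (\<sigma> a))) (sub_comp (single 0 0 (liftME 0 (snd (\<sigma> a)))) (sub_under_mu \<sigma>))
      = (\<lambda>i. \<sigma> (rename_idx a i))"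
    by (rule ext) (simp add: ren_after_def sub_comp_def single_def sub_under_mu_def
        msubE_single0_liftME rename_idx_def split: nat.split)
  then show ?thesis
    by (simp only: msub_msub(2)[of "single 0 0 (liftME 0 (snd (\<sigma> a)))" "sub_under_mu \<sigma>" c]
        ren_msub(2) msub_ren(2))
qed

text \<open>Under a substitution, a renaming B-step \<open>[a]\<mu>.c \<rightarrow> \<dots>\<close> becomes
  \<open>[j]E[\<mu>.c'] \<twoheadrightarrow>\<^sub>A [j]\<mu>.c'' \<rightarrow>\<^sub>B \<dots>\<close> where \<open>\<sigma> a = (j, E)\<close>.\<close>
lemma rootBc_msub: "rootBc c d \<Longrightarrow> stepABc\<^sup>*\<^sup>* (msubc \<sigma> c) (msubc \<sigma> d)"
proof -
  assume "rootBc c d"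
  then obtain a \<rho> c' where cd: "c = Cmd a (Mu \<rho> c')" "d = msubc (ren (rename_idx a)) c'"
    using rootBc_inv by blast
  let ?c'' = "msubc (sub_under_mu \<sigma>) c'"
  let ?E = "snd (\<sigma> a)"
  let ?pulled = "Mu \<rho> (msubc (single 0 0 (liftME 0 ?E)) ?c'')"
  have "stepABc\<^sup>*\<^sup>* (msubc \<sigma> c) (Cmd (fst (\<sigma> a)) ?pulled)"
    using cd by (simp add: stepABc_Cmd redAs_into_stepAB redAs_pull_mu)
  also have "redBc (Cmd (fst (\<sigma> a)) ?pulled) (msubc \<sigma> d)"
    using rootBc_rename[of "fst (\<sigma> a)" \<rho> "msubc (single 0 0 (liftME 0 ?E)) ?c''"] cd
    by (simp add: msubc_rename compat_compatc.rootc)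
  then have "stepABc\<^sup>*\<^sup>* (Cmd (fst (\<sigma> a)) ?pulled) (msubc \<sigma> d)"
    by (rule redBc_into_stepABc)
  finally show ?thesis .
qed

lemma redB_msub:
  "redB t u \<Longrightarrow> stepAB\<^sup>*\<^sup>* (msub \<sigma> t) (msub \<sigma> u)"
  "redBc c d \<Longrightarrow> stepABc\<^sup>*\<^sup>* (msubc \<sigma> c) (msubc \<sigma> d)"
  by (induct t u and c d arbitrary: \<sigma> and \<sigma> rule: compat_compatc.inducts)
    (auto intro: redB_into_stepAB compat_compatc.root rootBt_msub rootBc_msub stepAB_Lam stepAB_Mu
      stepABc_Cmd stepAB_S stepAB_App stepAB_Nrec stepAB_fill)

lemma stepAB_msub: "stepAB\<^sup>*\<^sup>* t u \<Longrightarrow> stepAB\<^sup>*\<^sup>* (msub \<sigma> t) (msub \<sigma> u)"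
  by (erule rtranclp_map) (metis stepAB_iff redA_into_stepAB redA_msub(1) redB_msub(1))

lemma stepAB_liftM: "stepAB\<^sup>*\<^sup>* t u \<Longrightarrow> stepAB\<^sup>*\<^sup>* (liftM k t) (liftM k u)"
  by (simp add: liftM_as_msub stepAB_msub)

lemma redB_liftL:
  "redB t u \<Longrightarrow> redB (liftL j t) (liftL j u)"
  "redBc c d \<Longrightarrow> redBc (liftLc j c) (liftLc j d)"
proof (induct t u and c d arbitrary: j and j rule: compat_compatc.inducts)
  case (root t u)
  then obtain \<rho> where "t = Mu \<rho> (Cmd 0 (liftM 0 u))" using rootBt_inv by blast
  then show ?case using rootBt_eta[of \<rho> "liftL j u"]
    by (auto simp: liftL_liftM intro: compat_compatc.intros)
next
  case (rootc c d)
  then obtain a \<rho> c' where "c = Cmd a (Mu \<rho> c')" "d = msubc (ren (rename_idx a)) c'"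
    using rootBc_inv by blast
  then show ?case using rootBc_rename[of a \<rho> "liftLc j c'"]
    by (auto simp: msub_ren_liftL intro: compat_compatc.intros)
qed (auto intro: compat_compatc.intros)

lemma stepAB_liftL: "stepAB\<^sup>*\<^sup>* t u \<Longrightarrow> stepAB\<^sup>*\<^sup>* (liftL j t) (liftL j u)"
  by (erule rtranclp_map) (auto simp: stepAB_iff intro: redA_liftL redB_liftL)

lemma redB_subst:
  "redB t u \<Longrightarrow> redB (subst k s t) (subst k s u)"
  "redBc c d \<Longrightarrow> redBc (substc k s c) (substc k s d)"
proof (induct t u and c d arbitrary: k s and k s rule: compat_compatc.inducts)
  case (root t u)
  then obtain \<rho> where "t = Mu \<rho> (Cmd 0 (liftM 0 u))" using rootBt_inv by blast
  then show ?case using rootBt_eta[of \<rho> "subst k s u"]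
    by (auto simp: liftM_as_msub ren_subst intro: compat_compatc.intros)
next
  case (rootc c d)
  then obtain a \<rho> c' where "c = Cmd a (Mu \<rho> c')" "d = msubc (ren (rename_idx a)) c'"
    using rootBc_inv by blast
  then show ?case using rootBc_rename[of a \<rho> "substc k (liftM 0 s) c'"]
    by (auto simp: ren_subst intro: compat_compatc.intros)
qed (auto intro: compat_compatc.intros)

lemma stepAB_subst_arg:
  "stepAB\<^sup>*\<^sup>* x x' \<Longrightarrow> stepAB\<^sup>*\<^sup>* (subst k x u) (subst k x' u)"
  "stepAB\<^sup>*\<^sup>* x x' \<Longrightarrow> stepABc\<^sup>*\<^sup>* (substc k x c) (substc k x' c)"
proof (induct u and c arbitrary: k x x' and k x x')
  case (Lam \<rho> t) then show ?case by (simp add: stepAB_Lam stepAB_liftL)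
next
  case (Mu \<rho> c) then show ?case by (simp add: stepAB_Mu stepAB_msub liftM_as_msub)
qed (auto intro: stepABc_Cmd stepAB_S stepAB_App stepAB_Nrec)

inductive ctx_red :: "ctx \<Rightarrow> ctx \<Rightarrow> bool" where
  "ctx_red Hole Hole"
| "ctx_red E E' \<Longrightarrow> stepAB\<^sup>*\<^sup>* t t' \<Longrightarrow> ctx_red (CApp E t) (CApp E' t')"
| "ctx_red E E' \<Longrightarrow> ctx_red (CS E) (CS E')"
| "ctx_red E E' \<Longrightarrow> stepAB\<^sup>*\<^sup>* r r' \<Longrightarrow> stepAB\<^sup>*\<^sup>* s s' \<Longrightarrow>
     ctx_red (CNrec \<rho> r s E) (CNrec \<rho> r' s' E')"

lemma ctx_red_fill: "ctx_red E E' \<Longrightarrow> stepAB\<^sup>*\<^sup>* (fill E x) (fill E' x)"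
  by (induct rule: ctx_red.induct) (auto intro: stepAB_App stepAB_S stepAB_Nrec)

lemma ctx_red_liftLE: "ctx_red E E' \<Longrightarrow> ctx_red (liftLE j E) (liftLE j E')"
  by (induct rule: ctx_red.induct) (auto intro: ctx_red.intros stepAB_liftL)

lemma ctx_red_msubE: "ctx_red E E' \<Longrightarrow> ctx_red (msubE \<sigma> E) (msubE \<sigma> E')"
  by (induct rule: ctx_red.induct) (auto intro: ctx_red.intros stepAB_msub)

lemma stepAB_msub_ctx_red:
  "\<forall>i. fst (\<sigma> i) = fst (\<sigma>' i) \<and> ctx_red (snd (\<sigma> i)) (snd (\<sigma>' i)) \<Longrightarrow>
     stepAB\<^sup>*\<^sup>* (msub \<sigma> t) (msub \<sigma>' t)"
  "\<forall>i. fst (\<sigma> i) = fst (\<sigma>' i) \<and> ctx_red (snd (\<sigma> i)) (snd (\<sigma>' i)) \<Longrightarrow>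
     stepABc\<^sup>*\<^sup>* (msubc \<sigma> c) (msubc \<sigma>' c)"
proof (induct t and c arbitrary: \<sigma> \<sigma>' and \<sigma> \<sigma>')
  case (Lam \<rho> t)
  then have "\<forall>i. fst (sub_liftL 0 \<sigma> i) = fst (sub_liftL 0 \<sigma>' i)
      \<and> ctx_red (snd (sub_liftL 0 \<sigma> i)) (snd (sub_liftL 0 \<sigma>' i))"
    by (auto simp: sub_liftL_def intro: ctx_red_liftLE)
  with Lam show ?case by (simp add: stepAB_Lam)
next
  case (Mu \<rho> c)
  then have "\<forall>i. fst (sub_under_mu \<sigma> i) = fst (sub_under_mu \<sigma>' i)
      \<and> ctx_red (snd (sub_under_mu \<sigma> i)) (snd (sub_under_mu \<sigma>' i))"
    by (auto simp: sub_under_mu_def liftME_as_msub intro: ctx_red_msubE ctx_red.intros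
        split: nat.split)
  with Mu show ?case by (simp add: stepAB_Mu)
next
  case (Cmd i t)
  then have "stepAB\<^sup>*\<^sup>* (fill (snd (\<sigma> i)) (msub \<sigma> t)) (fill (snd (\<sigma>' i)) (msub \<sigma>' t))"
    by (meson stepAB_fill ctx_red_fill rtranclp_trans)
  with Cmd.prems show ?case by (simp add: stepABc_Cmd)
qed (auto intro: stepAB_App stepAB_S stepAB_Nrec)

lemma stepAB_ssubc_ctx_red:
  "ctx_red E E' \<Longrightarrow> stepAB\<^sup>*\<^sup>* (Mu \<rho> (ssubc 0 0 E c)) (Mu \<rho> (ssubc 0 0 E' c))"
  unfolding ssub_as_msub
  by (intro stepAB_Mu stepAB_msub_ctx_red) (auto simp: single_def intro: ctx_red.intros)

section \<open>A-steps are reflected by renamings\<close>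

lemma ren_eq_iff:
  "msub (ren f) t = Lam \<rho> a \<longleftrightarrow> (\<exists>t0. t = Lam \<rho> t0 \<and> a = msub (ren f) t0)"
  "msub (ren f) t = App a b \<longleftrightarrow> (\<exists>a0 b0. t = App a0 b0 \<and> a = msub (ren f) a0 \<and> b = msub (ren f) b0)"
  "msub (ren f) t = Mu \<rho> c \<longleftrightarrow> (\<exists>c0. t = Mu \<rho> c0 \<and> c = msubc (ren (ren_up f)) c0)"
  "msub (ren f) t = S a \<longleftrightarrow> (\<exists>a0. t = S a0 \<and> a = msub (ren f) a0)"
  "msub (ren f) t = Zero \<longleftrightarrow> t = Zero"
  "msub (ren f) t = Nrec \<rho> a b d \<longleftrightarrow> (\<exists>a0 b0 d0. t = Nrec \<rho> a0 b0 d0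
     \<and> a = msub (ren f) a0 \<and> b = msub (ren f) b0 \<and> d = msub (ren f) d0)"
  "msubc (ren f) c = Cmd i a \<longleftrightarrow> (\<exists>j t0. c = Cmd j t0 \<and> i = f j \<and> a = msub (ren f) t0)"
  by (cases t; auto; cases c; auto)+

lemmas ren_eq_iff' =
  ren_eq_iff[unfolded eq_commute[of "msub (ren f) t" for f t] eq_commute[of "msubc (ren f) c" for f c]]

lemma ren_eq_num: "msub (ren f) t = num n \<Longrightarrow> t = num n"
  by (induct n arbitrary: t) (auto simp: ren_eq_iff ren_eq_iff')

lemma ren_up_under_mu_single0:
  "msubc (ren (ren_up f)) (msubc (single 0 0 E) c)
   = msubc (single 0 0 (msubE (ren (ren_up f)) E)) (msubc (ren (ren_up f)) c)"
  using msubc_under_mu_single0[of "ren f"] by simp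

lemma ren_up_liftM: "msub (ren (ren_up f)) (liftM 0 t) = liftM 0 (msub (ren f) t)"
  using msub_under_mu_liftM[of "ren f" t] by simp

lemma rootA_ren_reflect:
  assumes "rootA (msub (ren f) t) v"
  shows "\<exists>t'. rootA t t' \<and> v = msub (ren f) t'"
  using assms
proof cases
  case (beta \<rho> w r)
  then obtain w0 r0 where "t = App (Lam \<rho> w0) r0" "w = msub (ren f) w0" "r = msub (ren f) r0"
    by (auto simp: ren_eq_iff ren_eq_iff')
  with beta show ?thesis by (auto simp: ren_subst intro: rootA.intros)
next
  case (muS \<rho> c)
  then obtain c0 where "t = S (Mu \<rho> c0)" "c = msubc (ren (ren_up f)) c0"
    by (auto simp: ren_eq_iff ren_eq_iff')
  with muS show ?thesis using rootA.muS[of \<rho> c0]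
    by (auto simp: ssub_as_msub ren_up_under_mu_single0)
next
  case (muApp \<rho> c s)
  then obtain c0 s0 where "t = App (Mu \<rho> c0) s0" "c = msubc (ren (ren_up f)) c0" "s = msub (ren f) s0"
    by (auto simp: ren_eq_iff ren_eq_iff')
  with muApp show ?thesis using rootA.muApp[of \<rho> c0 s0]
    by (auto simp: ssub_as_msub ren_up_under_mu_single0 ren_up_liftM)
next
  case (nrec0 \<rho> r)
  then show ?thesis by (auto simp: ren_eq_iff ren_eq_iff' intro: rootA.intros)
next
  case (nrecS \<rho> r s n)
  then obtain r0 s0 m where "t = Nrec \<rho> r0 s0 m" "r = msub (ren f) r0" "s = msub (ren f) s0"
    and m: "msub (ren f) m = num (Suc n)" by (auto simp: ren_eq_iff ren_eq_iff')
  moreover have "m = num (Suc n)" using m by (rule ren_eq_num)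
  ultimately show ?thesis using nrecS rootA.nrecS[of \<rho> r0 s0 n] by auto
next
  case (muNrec \<rho> r s \<tau> c)
  then obtain r0 s0 c0 where "t = Nrec \<rho> r0 s0 (Mu \<tau> c0)" "r = msub (ren f) r0"
    "s = msub (ren f) s0" "c = msubc (ren (ren_up f)) c0"
    by (auto simp: ren_eq_iff ren_eq_iff')
  with muNrec show ?thesis using rootA.muNrec[of \<rho> r0 s0 \<tau> c0]
    by (auto simp: ssub_as_msub ren_up_under_mu_single0 ren_up_liftM)
qed

lemma redA_ren_reflect:
  "redA x v \<Longrightarrow> x = msub (ren f) t \<Longrightarrow> \<exists>t'. redA t t' \<and> v = msub (ren f) t'"
  "redAc y w \<Longrightarrow> y = msubc (ren f) c \<Longrightarrow> \<exists>c'. redAc c c' \<and> w = msubc (ren f) c'"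
proof (induct x v and y w arbitrary: f t and f c rule: compat_compatc.inducts)
  case (root x v)
  then show ?case using rootA_ren_reflect[of f t v] by (auto intro: compat_compatc.intros)
qed (simp_all add: ren_eq_iff'; fastforce intro: compat_compatc.intros)+

lemma redA_Lam_inv: "redA (Lam \<rho> u) v \<Longrightarrow> \<exists>u'. v = Lam \<rho> u' \<and> redA u u'"
  by (erule compat.cases) (auto elim: rootA.cases)

lemma redA_Mu_inv: "redA (Mu \<rho> c) v \<Longrightarrow> \<exists>d. v = Mu \<rho> d \<and> redAc c d"
  by (erule compat.cases) (auto elim: rootA.cases)

lemma redAc_Cmd_inv: "redAc (Cmd i u) e \<Longrightarrow> \<exists>u'. e = Cmd i u' \<and> redA u u'"
  by (erule compatc.cases) auto

lemma redA_App_inv: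
  "redA (App a b) v \<Longrightarrow>
     (\<exists>a'. v = App a' b \<and> redA a a') \<or> (\<exists>b'. v = App a b' \<and> redA b b') \<or> rootA (App a b) v"
  by (erule compat.cases) auto

lemma redA_S_inv: "redA (S a) v \<Longrightarrow> (\<exists>a'. v = S a' \<and> redA a a') \<or> rootA (S a) v"
  by (erule compat.cases) auto

lemma redA_Nrec_inv:
  "redA (Nrec \<rho> a b c) v \<Longrightarrow>
     (\<exists>a'. v = Nrec \<rho> a' b c \<and> redA a a') \<or> (\<exists>b'. v = Nrec \<rho> a b' c \<and> redA b b')
   \<or> (\<exists>c'. v = Nrec \<rho> a b c' \<and> redA c c') \<or> rootA (Nrec \<rho> a b c) v"
  by (erule compat.cases) auto

lemma redB_Lam_inv: "redB t (Lam \<rho> w) \<Longrightarrow> \<not> rootBt t (Lam \<rho> w) \<Longrightarrow> \<exists>w0. t = Lam \<rho> w0 \<and> redB w0 w"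
  by (erule compat.cases) auto

lemma redB_Mu_inv: "redB t (Mu \<rho> c) \<Longrightarrow> \<not> rootBt t (Mu \<rho> c) \<Longrightarrow> \<exists>c0. t = Mu \<rho> c0 \<and> redBc c0 c"
  by (erule compat.cases) auto

lemma redB_S_inv: "redB t (S w) \<Longrightarrow> \<not> rootBt t (S w) \<Longrightarrow> \<exists>w0. t = S w0 \<and> redB w0 w"
  by (erule compat.cases) auto

lemma redB_Zero_inv: "redB t Zero \<Longrightarrow> rootBt t Zero"
  by (erule compat.cases) auto

lemma redA_eta_redex: "redA u v \<Longrightarrow> redA (Mu \<rho> (Cmd 0 (liftM 0 u))) (Mu \<rho> (Cmd 0 (liftM 0 v)))"
  using redA_msub(1)[of u v "ren (lift_idx 0)"] by (auto simp: liftM_as_msub intro: compat_compatc.intros)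

lemma stepAB_eta: "stepAB\<^sup>*\<^sup>* (Mu \<rho> (Cmd 0 (liftM 0 v))) v"
  by (intro redB_into_stepAB compat_compatc.root rootBt_eta)

text \<open>Evaluation-context frames of depth one: exactly the positions from which a
  mu-abstraction is pulled out by an A-rule.\<close>
definition frame :: "ctx \<Rightarrow> bool" where
  "frame E \<longleftrightarrow> (\<exists>s. E = CApp Hole s) \<or> E = CS Hole \<or> (\<exists>\<rho> r s. E = CNrec \<rho> r s Hole)"

lemma redA_frame_eta:
  assumes "frame E"
  shows "redA (fill E (Mu \<tau> (Cmd 0 (liftM 0 u)))) (Mu \<tau> (Cmd 0 (liftM 0 (fill E u))))"
proof -
  have lifted: "ssub 0 0 F (liftM 0 u) = liftM 0 u" for F
    by (simp add: ssub_as_msub msub_single0_liftM)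
  show ?thesis
    using assms rootA.muApp[of \<tau> "Cmd 0 (liftM 0 u)"] rootA.muS[of \<tau> "Cmd 0 (liftM 0 u)"]
      rootA.muNrec[of _ _ _ \<tau> "Cmd 0 (liftM 0 u)"]
    by (auto simp: frame_def lifted intro: compat_compatc.root)
qed

lemma stepAB_ssubc_redBc:
  "redBc c0 c \<Longrightarrow> stepAB\<^sup>*\<^sup>* (Mu \<rho> (ssubc k b E c0)) (Mu \<rho> (ssubc k b E c))"
  by (simp add: ssub_as_msub stepAB_Mu redB_msub)

lemma redB_to_num:
  "redB y (num n) \<Longrightarrow> (\<exists>\<rho>. y = Mu \<rho> (Cmd 0 (num n))) \<or> (\<exists>y'. redA y y' \<and> stepAB\<^sup>*\<^sup>* y' (num n))"
proof (induct n arbitrary: y)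
  case 0
  then have "rootBt y Zero" by (simp add: redB_Zero_inv)
  then show ?case by (auto dest: rootBt_inv)
next
  case (Suc n)
  show ?case
  proof (cases "rootBt y (num (Suc n))")
    case True
    then show ?thesis by (auto dest: rootBt_inv)
  next
    case False
    with Suc.prems obtain y0 where y: "y = S y0" "redB y0 (num n)"
      using redB_S_inv by fastforce
    from Suc.hyps[OF y(2)] show ?thesis
    proof
      assume "\<exists>\<rho>. y0 = Mu \<rho> (Cmd 0 (num n))"
      then obtain \<rho> where y0: "y0 = Mu \<rho> (Cmd 0 (num n))" by blast
      have "redA y (Mu \<rho> (Cmd 0 (num (Suc n))))"
        using redA_frame_eta[of "CS Hole" \<rho> "num n"] y y0 by (simp add: frame_def)
      moreover have "stepAB\<^sup>*\<^sup>* (Mu \<rho> (Cmd 0 (num (Suc n)))) (num (Suc n))"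
        using stepAB_eta[of \<rho> "num (Suc n)"] by simp
      ultimately show ?thesis by blast
    next
      assume "\<exists>y'. redA y0 y' \<and> stepAB\<^sup>*\<^sup>* y' (num n)"
      then show ?thesis using y by (auto intro: compat_compatc.intros stepAB_S)
    qed
  qed
qed

section \<open>Commuting a B-step past an A-step\<close>

definition BA_commutes :: "trm \<Rightarrow> trm \<Rightarrow> bool" where
  "BA_commutes t u \<longleftrightarrow> (\<forall>v. redA u v \<longrightarrow> (\<exists>w. redA t w \<and> stepAB\<^sup>*\<^sup>* w v))"

definition BA_commutesc :: "cmd \<Rightarrow> cmd \<Rightarrow> bool" where
  "BA_commutesc c d \<longleftrightarrow> (\<forall>e. redAc d e \<longrightarrow> (\<exists>f. redAc c f \<and> stepABc\<^sup>*\<^sup>* f e))"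

text \<open>Root mu-eta step: perform the A-step under the eta-redex, then contract it.\<close>
lemma commutes_rootBt: "rootBt t u \<Longrightarrow> BA_commutes t u"
  unfolding BA_commutes_def using redA_eta_redex stepAB_eta by (blast dest: rootBt_inv)

text \<open>Mu-eta step in the hole of a frame: the A-rule pulling out the mu
  produces the eta-expansion of the frame.\<close>
lemma commutes_frame_rootBt:
  assumes "frame E" and "rootBt t u"
  shows "BA_commutes (fill E t) (fill E u)"
  unfolding BA_commutes_def
proof (intro allI impI)
  fix v assume "redA (fill E u) v"
  from assms(2) obtain \<tau> where "t = Mu \<tau> (Cmd 0 (liftM 0 u))" by (blast dest: rootBt_inv)
  then have "redA (fill E t) (Mu \<tau> (Cmd 0 (liftM 0 (fill E u))))"
    using redA_frame_eta[OF assms(1)] by simp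
  moreover have "stepAB\<^sup>*\<^sup>* (Mu \<tau> (Cmd 0 (liftM 0 (fill E u)))) v"
    using redA_eta_redex[OF \<open>redA (fill E u) v\<close>] stepAB_eta by (blast intro: redA_into_stepAB rtranclp_trans)
  ultimately show "\<exists>w. redA (fill E t) w \<and> stepAB\<^sup>*\<^sup>* w v" by blast
qed

text \<open>Renaming step at the root of a command: the A-step is reflected by the renaming.\<close>
lemma commutes_rootBc:
  assumes "rootBc c d"
  shows "BA_commutesc c d"
  unfolding BA_commutesc_def
proof (intro allI impI)
  fix e assume "redAc d e"
  from assms obtain a \<rho> c' where c: "c = Cmd a (Mu \<rho> c')" and d: "d = msubc (ren (rename_idx a)) c'"
    using rootBc_inv by blast
  with \<open>redAc d e\<close> obtain c'' where "redAc c' c''" "e = msubc (ren (rename_idx a)) c''"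
    using redA_ren_reflect(2) by blast
  moreover have "redBc (Cmd a (Mu \<rho> c'')) (msubc (ren (rename_idx a)) c'')"
    by (intro compat_compatc.rootc rootBc_rename)
  ultimately show "\<exists>f. redAc c f \<and> stepABc\<^sup>*\<^sup>* f e"
    using c by (blast intro: compat_compatc.intros redBc_into_stepABc)
qed

text \<open>Below Lam, Mu and a command every A-step is inside the argument, so the
  induction hypothesis applies.\<close>
lemma commutes_Lam: "BA_commutes t u \<Longrightarrow> BA_commutes (Lam \<rho> t) (Lam \<rho> u)"
  unfolding BA_commutes_def
  by (blast dest: redA_Lam_inv intro: compat_compatc.intros stepAB_Lam)

lemma commutes_Mu: "BA_commutesc c d \<Longrightarrow> BA_commutes (Mu \<rho> c) (Mu \<rho> d)"
  unfolding BA_commutes_def BA_commutesc_def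
  by (blast dest: redA_Mu_inv intro: compat_compatc.intros stepAB_Mu)

lemma commutes_Cmd: "BA_commutes t u \<Longrightarrow> BA_commutesc (Cmd i t) (Cmd i u)"
  unfolding BA_commutes_def BA_commutesc_def
  by (blast dest: redAc_Cmd_inv intro: compat_compatc.intros stepABc_Cmd)

text \<open>In these cases the A-step may be a root redex whose redex pattern the B-step
  created or changed; B-steps at the root of the hole of a frame are handled by
  \<open>commutes_frame_rootBt\<close>.\<close>

lemma commutes_AppL:
  assumes B: "redB t u" and IH: "BA_commutes t u"
  shows "BA_commutes (App t s) (App u s)"
proof (cases "rootBt t u")
  case True
  then show ?thesis using commutes_frame_rootBt[of "CApp Hole s" t u] by (simp add: frame_def)
next
  case nonroot: False
  show ?thesis unfolding BA_commutes_def
  proof (intro allI impI)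
    fix v assume "redA (App u s) v"
    then consider (left) u' where "v = App u' s" "redA u u'"
      | (right) s' where "v = App u s'" "redA s s'" | (root) "rootA (App u s) v"
      using redA_App_inv by blast
    then show "\<exists>w. redA (App t s) w \<and> stepAB\<^sup>*\<^sup>* w v"
    proof cases
      case left
      with IH obtain w where "redA t w" "stepAB\<^sup>*\<^sup>* w u'" by (auto simp: BA_commutes_def)
      with left show ?thesis by (blast intro: compat_compatc.intros stepAB_App)
    next
      case right
      with B show ?thesis by (blast intro: compat_compatc.intros redB_into_stepAB)
    next
      case root
      then show ?thesis
      proof cases
        case (beta \<rho> w)
        then obtain w0 where "t = Lam \<rho> w0" "redB w0 w" using B nonroot redB_Lam_inv by blast
        with beta show ?thesis
          by (blast intro: compat_compatc.intros rootA.intros redB_into_stepAB redB_subst)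
      next
        case (muApp \<rho> c)
        then obtain c0 where "t = Mu \<rho> c0" "redBc c0 c" using B nonroot redB_Mu_inv by blast
        with muApp show ?thesis
          by (blast intro: compat_compatc.intros rootA.intros stepAB_ssubc_redBc)
      qed
    qed
  qed
qed

lemma commutes_AppR:
  assumes B: "redB t u" and IH: "BA_commutes t u"
  shows "BA_commutes (App s t) (App s u)"
  unfolding BA_commutes_def
proof (intro allI impI)
  fix v assume "redA (App s u) v"
  then consider (left) s' where "v = App s' u" "redA s s'"
    | (right) u' where "v = App s u'" "redA u u'" | (root) "rootA (App s u) v"
    using redA_App_inv by blast
  then show "\<exists>w. redA (App s t) w \<and> stepAB\<^sup>*\<^sup>* w v"
  proof cases
    case left
    with B show ?thesis by (blast intro: compat_compatc.intros redB_into_stepAB)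
  next
    case right
    with IH obtain w where "redA t w" "stepAB\<^sup>*\<^sup>* w u'" by (auto simp: BA_commutes_def)
    with right show ?thesis by (blast intro: compat_compatc.intros stepAB_App)
  next
    case root
    then show ?thesis
    proof cases
      case (beta \<rho> w)
      then show ?thesis using B
        by (blast intro: compat_compatc.intros rootA.intros stepAB_subst_arg redB_into_stepAB)
    next
      case (muApp \<rho> c)
      have "ctx_red (CApp Hole (liftM 0 t)) (CApp Hole (liftM 0 u))"
        using B by (auto intro!: ctx_red.intros intro: stepAB_liftM redB_into_stepAB)
      with muApp show ?thesis
        by (blast intro: compat_compatc.intros rootA.intros stepAB_ssubc_ctx_red)
    qed
  qed
qed

lemma commutes_S:
  assumes B: "redB t u" and IH: "BA_commutes t u"
  shows "BA_commutes (S t) (S u)"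
proof (cases "rootBt t u")
  case True
  then show ?thesis using commutes_frame_rootBt[of "CS Hole" t u] by (simp add: frame_def)
next
  case nonroot: False
  show ?thesis unfolding BA_commutes_def
  proof (intro allI impI)
    fix v assume "redA (S u) v"
    then consider (inner) u' where "v = S u'" "redA u u'" | (root) "rootA (S u) v"
      using redA_S_inv by blast
    then show "\<exists>w. redA (S t) w \<and> stepAB\<^sup>*\<^sup>* w v"
    proof cases
      case inner
      with IH obtain w where "redA t w" "stepAB\<^sup>*\<^sup>* w u'" by (auto simp: BA_commutes_def)
      with inner show ?thesis by (blast intro: compat_compatc.intros stepAB_S)
    next
      case root
      then show ?thesis
      proof cases
        case (muS \<rho> c)
        then obtain c0 where "t = Mu \<rho> c0" "redBc c0 c" using B nonroot redB_Mu_inv by blast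
        with muS show ?thesis
          by (blast intro: compat_compatc.intros rootA.intros stepAB_ssubc_redBc)
      qed
    qed
  qed
qed

lemma commutes_Nrec1:
  assumes B: "redB t u" and IH: "BA_commutes t u"
  shows "BA_commutes (Nrec \<rho> t s r) (Nrec \<rho> u s r)"
  unfolding BA_commutes_def
proof (intro allI impI)
  fix v assume "redA (Nrec \<rho> u s r) v"
  then consider (arg1) u' where "v = Nrec \<rho> u' s r" "redA u u'"
    | (arg2) s' where "v = Nrec \<rho> u s' r" "redA s s'"
    | (arg3) r' where "v = Nrec \<rho> u s r'" "redA r r'" | (root) "rootA (Nrec \<rho> u s r) v"
    using redA_Nrec_inv by blast
  then show "\<exists>w. redA (Nrec \<rho> t s r) w \<and> stepAB\<^sup>*\<^sup>* w v"
  proof cases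
    case arg1
    with IH obtain w where "redA t w" "stepAB\<^sup>*\<^sup>* w u'" by (auto simp: BA_commutes_def)
    with arg1 show ?thesis by (blast intro: compat_compatc.intros stepAB_Nrec)
  next
    case arg2 with B show ?thesis by (blast intro: compat_compatc.intros redB_into_stepAB)
  next
    case arg3 with B show ?thesis by (blast intro: compat_compatc.intros redB_into_stepAB)
  next
    case root
    then show ?thesis
    proof cases
      case nrec0 with B show ?thesis by (blast intro: compat_compatc.intros rootA.intros redB_into_stepAB)
    next
      case (nrecS n)
      with B show ?thesis
        by (blast intro: compat_compatc.intros rootA.intros redB_into_stepAB)
    next
      case (muNrec \<tau> c)
      have "ctx_red (CNrec \<rho> (liftM 0 t) (liftM 0 s) Hole) (CNrec \<rho> (liftM 0 u) (liftM 0 s) Hole)"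
        using B by (auto intro!: ctx_red.intros intro: stepAB_liftM redB_into_stepAB)
      with muNrec show ?thesis
        by (blast intro: compat_compatc.intros rootA.intros stepAB_ssubc_ctx_red)
    qed
  qed
qed

lemma commutes_Nrec2:
  assumes B: "redB t u" and IH: "BA_commutes t u"
  shows "BA_commutes (Nrec \<rho> s t r) (Nrec \<rho> s u r)"
  unfolding BA_commutes_def
proof (intro allI impI)
  fix v assume "redA (Nrec \<rho> s u r) v"
  then consider (arg1) s' where "v = Nrec \<rho> s' u r" "redA s s'"
    | (arg2) u' where "v = Nrec \<rho> s u' r" "redA u u'"
    | (arg3) r' where "v = Nrec \<rho> s u r'" "redA r r'" | (root) "rootA (Nrec \<rho> s u r) v"
    using redA_Nrec_inv by blast
  then show "\<exists>w. redA (Nrec \<rho> s t r) w \<and> stepAB\<^sup>*\<^sup>* w v"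
  proof cases
    case arg1 with B show ?thesis by (blast intro: compat_compatc.intros redB_into_stepAB)
  next
    case arg2
    with IH obtain w where "redA t w" "stepAB\<^sup>*\<^sup>* w u'" by (auto simp: BA_commutes_def)
    with arg2 show ?thesis by (blast intro: compat_compatc.intros stepAB_Nrec)
  next
    case arg3 with B show ?thesis by (blast intro: compat_compatc.intros redB_into_stepAB)
  next
    case root
    then show ?thesis
    proof cases
      case nrec0 then show ?thesis by (blast intro: compat_compatc.intros rootA.intros)
    next
      case (nrecS n)
      text \<open>The step function occurs twice in the contractum; both copies are B-reduced.\<close>
      have "stepAB\<^sup>*\<^sup>* (App (App t (num n)) (Nrec \<rho> s t (num n))) (App (App u (num n)) (Nrec \<rho> s u (num n)))"
        using B by (intro stepAB_App stepAB_Nrec) (auto intro: redB_into_stepAB)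
      with nrecS show ?thesis by (blast intro: compat_compatc.intros rootA.intros)
    next
      case (muNrec \<tau> c)
      have "ctx_red (CNrec \<rho> (liftM 0 s) (liftM 0 t) Hole) (CNrec \<rho> (liftM 0 s) (liftM 0 u) Hole)"
        using B by (auto intro!: ctx_red.intros intro: stepAB_liftM redB_into_stepAB)
      with muNrec show ?thesis
        by (blast intro: compat_compatc.intros rootA.intros stepAB_ssubc_ctx_red)
    qed
  qed
qed

lemma redA_Nrec_S_redB:
  assumes "redB y (num n)"
  shows "\<exists>w. redA (Nrec \<rho> r s (S y)) w \<and> stepAB\<^sup>*\<^sup>* w (App (App s (num n)) (Nrec \<rho> r s (num n)))"
proof -
  have unfold: "redA (Nrec \<rho> r s (S (num n))) (App (App s (num n)) (Nrec \<rho> r s (num n)))"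
    by (intro compat_compatc.root rootA.nrecS)
  from redB_to_num[OF assms] show ?thesis
  proof
    assume "\<exists>\<tau>. y = Mu \<tau> (Cmd 0 (num n))"
    then obtain \<tau> where y: "y = Mu \<tau> (Cmd 0 (num n))" by blast
    have "redA (Nrec \<rho> r s (S y)) (Nrec \<rho> r s (Mu \<tau> (Cmd 0 (S (num n)))))"
      using redA_frame_eta[of "CS Hole" \<tau> "num n"] y by (auto simp: frame_def intro: compat_compatc.intros)
    moreover have "stepAB\<^sup>*\<^sup>* (Nrec \<rho> r s (Mu \<tau> (Cmd 0 (S (num n))))) (Nrec \<rho> r s (S (num n)))"
      using stepAB_eta[of \<tau> "num (Suc n)"] by (simp add: stepAB_Nrec)
    ultimately show ?thesis using unfold by (blast intro: redA_into_stepAB rtranclp_trans)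
  next
    assume "\<exists>y'. redA y y' \<and> stepAB\<^sup>*\<^sup>* y' (num n)"
    then obtain y' where "redA y y'" "stepAB\<^sup>*\<^sup>* y' (num n)" by blast
    then have "redA (Nrec \<rho> r s (S y)) (Nrec \<rho> r s (S y'))"
      and "stepAB\<^sup>*\<^sup>* (Nrec \<rho> r s (S y')) (Nrec \<rho> r s (S (num n)))"
      by (auto intro: compat_compatc.intros stepAB_Nrec stepAB_S)
    then show ?thesis using unfold by (blast intro: redA_into_stepAB rtranclp_trans)
  qed
qed

lemma commutes_Nrec3:
  assumes B: "redB t u" and IH: "BA_commutes t u"
  shows "BA_commutes (Nrec \<rho> s r t) (Nrec \<rho> s r u)"
proof (cases "rootBt t u")
  case True
  then show ?thesis using commutes_frame_rootBt[of "CNrec \<rho> s r Hole" t u] by (simp add: frame_def)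
next
  case nonroot: False
  show ?thesis unfolding BA_commutes_def
  proof (intro allI impI)
    fix v assume "redA (Nrec \<rho> s r u) v"
    then consider (arg1) s' where "v = Nrec \<rho> s' r u" "redA s s'"
      | (arg2) r' where "v = Nrec \<rho> s r' u" "redA r r'"
      | (arg3) u' where "v = Nrec \<rho> s r u'" "redA u u'" | (root) "rootA (Nrec \<rho> s r u) v"
      using redA_Nrec_inv by blast
    then show "\<exists>w. redA (Nrec \<rho> s r t) w \<and> stepAB\<^sup>*\<^sup>* w v"
    proof cases
      case arg1 with B show ?thesis by (blast intro: compat_compatc.intros redB_into_stepAB)
    next
      case arg2 with B show ?thesis by (blast intro: compat_compatc.intros redB_into_stepAB)
    next
      case arg3
      with IH obtain w where "redA t w" "stepAB\<^sup>*\<^sup>* w u'" by (auto simp: BA_commutes_def)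
      with arg3 show ?thesis by (blast intro: compat_compatc.intros stepAB_Nrec)
    next
      case root
      then show ?thesis
      proof cases
        case nrec0 with B nonroot show ?thesis by (blast dest: redB_Zero_inv)
      next
        case (nrecS n)
        then obtain y where "t = S y" "redB y (num n)" using B nonroot redB_S_inv by blast
        with nrecS show ?thesis using redA_Nrec_S_redB by blast
      next
        case (muNrec \<tau> c)
        then obtain c0 where "t = Mu \<tau> c0" "redBc c0 c" using B nonroot redB_Mu_inv by blast
        with muNrec show ?thesis
          by (blast intro: compat_compatc.intros rootA.intros stepAB_ssubc_redBc)
      qed
    qed
  qed
qed

lemma redB_commutes:
  "redB t u \<Longrightarrow> BA_commutes t u"
  "redBc c d \<Longrightarrow> BA_commutesc c d"
  by (induct t u and c d rule: compat_compatc.inducts)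
    (auto intro: commutes_rootBt commutes_rootBc commutes_Lam commutes_Mu commutes_Cmd
      commutes_AppL commutes_AppR commutes_S commutes_Nrec1 commutes_Nrec2 commutes_Nrec3)

lemma commute_rtranclp:
  assumes single: "\<And>a b c. B a b \<Longrightarrow> A b c \<Longrightarrow> \<exists>d. A a d \<and> C\<^sup>*\<^sup>* d c"
    and "B\<^sup>*\<^sup>* a b" and "A b c"
  shows "\<exists>d. A a d \<and> C\<^sup>*\<^sup>* d c"
  using assms(2,3)
proof (induct arbitrary: c rule: converse_rtranclp_induct)
  case base then show ?case by blast
next
  case (step x y)
  then obtain d where "A y d" "C\<^sup>*\<^sup>* d c" by blast
  moreover from single[OF step(1) this(1)] obtain d' where "A x d'" "C\<^sup>*\<^sup>* d' d" by blast
  ultimately show ?case by (blast intro: rtranclp_trans)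
qed

theorem mainTheorem16:
  shows "(\<forall>t1 t2 t3. stepB t1 t2 \<and> stepA t2 t3 \<longrightarrow>
            (\<exists>t4. stepA t1 t4 \<and> stepAB\<^sup>*\<^sup>* t4 t3))
       \<and> (\<forall>t1 t2 t3. stepB\<^sup>*\<^sup>* t1 t2 \<and> stepA t2 t3 \<longrightarrow>
            (\<exists>t4. stepA t1 t4 \<and> stepAB\<^sup>*\<^sup>* t4 t3))"
proof -
  have single: "\<exists>t4. stepA t1 t4 \<and> stepAB\<^sup>*\<^sup>* t4 t3" if "stepB t1 t2" "stepA t2 t3" for t1 t2 t3
    using redB_commutes(1) that unfolding stepA_def stepB_def BA_commutes_def by blast
  then have "\<exists>t4. stepA t1 t4 \<and> stepAB\<^sup>*\<^sup>* t4 t3" if "stepB\<^sup>*\<^sup>* t1 t2" "stepA t2 t3" for t1 t2 t3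
    using that by (rule commute_rtranclp)
  with single show ?thesis by blast
qed

end
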